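(* Let $\mathfrak g$ be the real linear span of the five matrices of any one of the following three families (for any real values of the parameters). Then every integral variety of type $(1/2,0)$ related to $\mathfrak g$ is affinely equivalent to (an open piece of) the quadric $v = 2x_1^2+|z_2|^2$. Family A (parameters $m_1,m_2,t_{16}\in\mathbb{R}$, $m_2\ne0$): $E_1=\begin{pmatrix} m_1&0&0&1\\0&m_1+\frac{i m_1 t_{16}}{m_2}&0&0\\4i&0&2m_1&0\\0&0&0&0\end{pmatrix}$, $E_2=\begin{pmatrix} m_2&0&0&i\\0&m_2+it_{16}&0&0\\0&0&2m_2&0\\0&0&0&0\end{pmatrix}$, $E_3=\begin{pmatrix}0&0&0&0\\0&0&0&1\\0&2i&0&0\\0&0&0&0\end{pmatrix}$, $E_4=\begin{pmatrix}0&0&0&0\\0&0&0&i\\0&2&0&0\\0&0&0&0\end{pmatrix}$, $E_5=\begin{pmatrix}0&0&0&0\\0&0&0&0\\0&0&0&1\\0&0&0&0\end{pmatrix}$. Family B (parameters $m_1,m_3,m_4\in\mathbb{R}$): $E_1=\begin{pmatrix} -2m_1&0&im_1^2&1\\0&0&0&0\\4i&0&2m_1&0\\0&0&0&0\end{pmatrix}$, $E_2=\begin{pmatrix}0&0&0&i\\0&0&0&0\\0&0&0&0\\0&0&0&0\end{pmatrix}$, $E_3=\begin{pmatrix} m_3&-m_1&\frac{i}{2}m_1m_3&0\\0&m_3-im_4&0&1\\0&2i&2m_3&0\\0&0&0&0\end{pmatrix}$, $E_4=\begin{pmatrix} m_4&im_1&\frac{i}{2}m_1m_4&0\\0&m_4+im_3&0&i\\0&2&2m_4&0\\0&0&0&0\end{pmatrix}$,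 $E_5=\begin{pmatrix}0&0&0&0\\0&0&0&0\\0&0&0&1\\0&0&0&0\end{pmatrix}$. Family C (parameters $m_1,m_2,m_3,m_4,t_7\in\mathbb{R}$): $E_1=\begin{pmatrix} 3t_7-2m_1&0&\frac{i}{2}(2m_1-t_7)(m_1-t_7)&1\\0&t_7&0&0\\4i&0&2m_1&0\\0&0&0&0\end{pmatrix}$, $E_2=\begin{pmatrix} m_2&0&\frac{i}{2}m_2(m_1-t_7)&i\\0&m_2&0&0\\0&0&2m_2&0\\0&0&0&0\end{pmatrix}$, $E_3=\begin{pmatrix} m_3&t_7-m_1&\frac{i}{2}m_3(m_1-t_7)&0\\0&m_3&0&1\\0&2i&2m_3&0\\0&0&0&0\end{pmatrix}$, $E_4=\begin{pmatrix} m_4&i(m_1-t_7)&\frac{i}{2}m_4(m_1-t_7)&0\\0&m_4&0&i\\0&2&2m_4&0\\0&0&0&0\end{pmatrix}$, $E_5=\begin{pmatrix} -\frac12 m_2(m_1-t_7)&0&-\frac{i}{4}m_2(m_1-t_7)^2&0\\0&-\frac12 m_2(m_1-t_7)&0&0\\0&0&-m_2(m_1-t_7)&1\\0&0&0&0\end{pmatrix}$.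
   Context: Coordinates in $\mathbb{C}^3$ are $z_1=x_1+iy_1$, $z_2=x_2+iy_2$, $w=u+iv$, $z=(z_1,z_2)$. To a complex $4\times4$ matrix $\begin{pmatrix}a_1&a_2&a_3&p\\ b_1&b_2&b_3&s\\ c_1&c_2&c_3&q\\0&0&0&0\end{pmatrix}$ one associates the holomorphic affine vector field $Z=(a_1z_1+a_2z_2+a_3w+p)\frac{\partial}{\partial z_1}+(b_1z_1+b_2z_2+b_3w+s)\frac{\partial}{\partial z_2}+(c_1z_1+c_2z_2+c_3w+q)\frac{\partial}{\partial w}$. For a real linear span $\mathfrak g$ of such matrices, an integral variety of type $(1/2,0)$ related to $\mathfrak g$ is a real-analytic strictly pseudoconvex real hypersurface $M$ defined near $0\in\mathbb{C}^3$, with $0\in M$, given near $0$ by an equation $v=|z_1|^2+|z_2|^2+\frac12(z_1^2+\bar z_1^2)+\sum_{k+l+2m\ge 3}F_{klm}(z,\bar z)u^m$ (with $F_{klm}$ a polynomial of degree $k$ in $z$ and $l$ in $\bar z$, the right-hand side real), such that for every $Z\in\mathfrak g$ the real vector field $Z+\bar Z$ is tangent to $M$, i.e. $\mathrm{Re}(Z(\Phi))|_M=0$ for a defining function $\Phi$ of $M$. Two hypersurfaces are affinely equivalent if a complex affine transformation of $\mathbb{C}^3$ maps a neighbourhood in one onto an open piece of the other. *)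

theory Defs
  imports "HOL-Analysis.Analysis"
begin

text \<open>Points of C^3 are triples (z1, z2, w); C^3 is viewed as a real normed vector space.\<close>
type_synonym cpt = "complex \<times> complex \<times> complex"

text \<open>Complex 4x4 matrices, indexed by 0..3 (row, column).\<close>
type_synonym cmat = "nat \<Rightarrow> nat \<Rightarrow> complex"

definition mat_rows :: "complex list list \<Rightarrow> cmat" where
  "mat_rows rs = (\<lambda>i j. rs ! i ! j)"

text \<open>Holomorphic affine vector field associated with a matrix: its coefficient vector
  (Z(z1), Z(z2), Z(w)) at a point.\<close>
definition vfield :: "cmat \<Rightarrow> cpt \<Rightarrow> cpt" where
  "vfield E p = (case p of (z1, z2, w) \<Rightarrow>
     (E 0 0 * z1 + E 0 1 * z2 + E 0 2 * w + E 0 3,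
      E 1 0 * z1 + E 1 1 * z2 + E 1 2 * w + E 1 3,
      E 2 0 * z1 + E 2 1 * z2 + E 2 2 * w + E 2 3))"

definition real_span :: "cmat list \<Rightarrow> cmat set" where
  "real_span Es = {(\<lambda>i j. \<Sum>k<length Es. complex_of_real (c k) * (Es ! k) i j) | c. True}"

type_synonym midx = "nat \<times> nat \<times> nat \<times> nat \<times> nat"

definition monom :: "midx \<Rightarrow> complex \<Rightarrow> complex \<Rightarrow> real \<Rightarrow> complex" where
  "monom \<alpha> z1 z2 u = (case \<alpha> of (k1, k2, l1, l2, m) \<Rightarrow>
     z1 ^ k1 * z2 ^ k2 * cnj z1 ^ l1 * cnj z2 ^ l2 * complex_of_real u ^ m)"

definition weight :: "midx \<Rightarrow> nat" where
  "weight \<alpha> = (case \<alpha> of (k1, k2, l1, l2, m) \<Rightarrow> k1 + k2 + l1 + l2 + 2 * m)"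

text \<open>The higher-order part  sum_{k+l+2m>=3} F_klm(z, zbar) u^m  as a power series.\<close>
definition hseries :: "(midx \<Rightarrow> complex) \<Rightarrow> complex \<Rightarrow> complex \<Rightarrow> real \<Rightarrow> complex" where
  "hseries a z1 z2 u = (\<Sum>\<^sub>\<infinity>\<alpha>. a \<alpha> * monom \<alpha> z1 z2 u)"

definition defphi :: "(midx \<Rightarrow> complex) \<Rightarrow> cpt \<Rightarrow> real" where
  "defphi a p = (case p of (z1, z2, w) \<Rightarrow>
     Im w - Re (complex_of_real ((cmod z1)\<^sup>2 + (cmod z2)\<^sup>2) + (z1\<^sup>2 + (cnj z1)\<^sup>2) / 2
                + hseries a z1 z2 (Re w)))"

text \<open>M is represented by its piece in an
  open neighbourhood U of 0 on which the defining series converges (absolutely) and is real.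
  Tangency of Z + conj Z to M at p is expressed as dPhi_p(Z(p)) = 0, which equals
  2 Re(Z(Phi))(p) for real Phi.  Strict pseudoconvexity is automatic from the normal form.\<close>
definition integral_variety :: "cmat set \<Rightarrow> cpt set \<Rightarrow> bool" where
  "integral_variety g M \<longleftrightarrow>
     (\<exists>(U :: cpt set) (a :: midx \<Rightarrow> complex). open U \<and> 0 \<in> U \<and>
        (\<forall>\<alpha>. a \<alpha> \<noteq> 0 \<longrightarrow> weight \<alpha> \<ge> 3) \<and>
        (\<forall>p \<in> U. case p of (z1, z2, w) \<Rightarrow>
           ((\<lambda>\<alpha>. norm (a \<alpha> * monom \<alpha> z1 z2 (Re w))) summable_on UNIV)
           \<and> Im (hseries a z1 z2 (Re w)) = 0) \<and>
        M = {p \<in> U. defphi a p = 0} \<and>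
        (\<forall>E \<in> g. \<forall>p \<in> M. \<exists>D. (defphi a has_derivative D) (at p) \<and> D (vfield E p) = 0))"

definition affmap :: "cmat \<Rightarrow> cpt \<Rightarrow> cpt \<Rightarrow> cpt" where
  "affmap L b p = (case p of (z1, z2, w) \<Rightarrow> case b of (b1, b2, b3) \<Rightarrow>
     (L 0 0 * z1 + L 0 1 * z2 + L 0 2 * w + b1,
      L 1 0 * z1 + L 1 1 * z2 + L 1 2 * w + b2,
      L 2 0 * z1 + L 2 1 * z2 + L 2 2 * w + b3))"

definition affinely_equivalent :: "cpt set \<Rightarrow> cpt set \<Rightarrow> bool" where
  "affinely_equivalent M N \<longleftrightarrow>
     (\<exists>L b W W'. bij (affmap L b) \<and> open W \<and> 0 \<in> W \<and> open W' \<and>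
        affmap L b ` (M \<inter> W) = N \<inter> W')"

definition quadric :: "cpt set" where
  "quadric = {(z1, z2, w). Im w = 2 * (Re z1)\<^sup>2 + (cmod z2)\<^sup>2}"

abbreviation (input) cr :: "real \<Rightarrow> complex" where "cr x \<equiv> complex_of_real x"

definition familyA :: "real \<Rightarrow> real \<Rightarrow> real \<Rightarrow> cmat list" where
  "familyA m1 m2 t16 =
    [mat_rows [[cr m1, 0, 0, 1], [0, cr m1 + \<i> * cr m1 * cr t16 / cr m2, 0, 0], [4 * \<i>, 0, 2 * cr m1, 0], [0, 0, 0, 0]],
     mat_rows [[cr m2, 0, 0, \<i>], [0, cr m2 + \<i> * cr t16, 0, 0], [0, 0, 2 * cr m2, 0], [0, 0, 0, 0]],
     mat_rows [[0, 0, 0, 0], [0, 0, 0, 1], [0, 2 * \<i>, 0, 0], [0, 0, 0, 0]],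
     mat_rows [[0, 0, 0, 0], [0, 0, 0, \<i>], [0, 2, 0, 0], [0, 0, 0, 0]],
     mat_rows [[0, 0, 0, 0], [0, 0, 0, 0], [0, 0, 0, 1], [0, 0, 0, 0]]]"

definition familyB :: "real \<Rightarrow> real \<Rightarrow> real \<Rightarrow> cmat list" where
  "familyB m1 m3 m4 =
    [mat_rows [[-2 * cr m1, 0, \<i> * cr m1 ^ 2, 1], [0, 0, 0, 0], [4 * \<i>, 0, 2 * cr m1, 0], [0, 0, 0, 0]],
     mat_rows [[0, 0, 0, \<i>], [0, 0, 0, 0], [0, 0, 0, 0], [0, 0, 0, 0]],
     mat_rows [[cr m3, - cr m1, \<i> / 2 * cr m1 * cr m3, 0], [0, cr m3 - \<i> * cr m4, 0, 1], [0, 2 * \<i>, 2 * cr m3, 0], [0, 0, 0, 0]],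
     mat_rows [[cr m4, \<i> * cr m1, \<i> / 2 * cr m1 * cr m4, 0], [0, cr m4 + \<i> * cr m3, 0, \<i>], [0, 2, 2 * cr m4, 0], [0, 0, 0, 0]],
     mat_rows [[0, 0, 0, 0], [0, 0, 0, 0], [0, 0, 0, 1], [0, 0, 0, 0]]]"

definition familyC :: "real \<Rightarrow> real \<Rightarrow> real \<Rightarrow> real \<Rightarrow> real \<Rightarrow> cmat list" where
  "familyC m1 m2 m3 m4 t7 =
    [mat_rows [[3 * cr t7 - 2 * cr m1, 0, \<i> / 2 * (2 * cr m1 - cr t7) * (cr m1 - cr t7), 1],
               [0, cr t7, 0, 0], [4 * \<i>, 0, 2 * cr m1, 0], [0, 0, 0, 0]],
     mat_rows [[cr m2, 0, \<i> / 2 * cr m2 * (cr m1 - cr t7), \<i>], [0, cr m2, 0, 0], [0, 0, 2 * cr m2, 0], [0, 0, 0, 0]],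
     mat_rows [[cr m3, cr t7 - cr m1, \<i> / 2 * cr m3 * (cr m1 - cr t7), 0], [0, cr m3, 0, 1], [0, 2 * \<i>, 2 * cr m3, 0], [0, 0, 0, 0]],
     mat_rows [[cr m4, \<i> * (cr m1 - cr t7), \<i> / 2 * cr m4 * (cr m1 - cr t7), 0], [0, cr m4, 0, \<i>], [0, 2, 2 * cr m4, 0], [0, 0, 0, 0]],
     mat_rows [[- 1 / 2 * cr m2 * (cr m1 - cr t7), 0, - \<i> / 4 * cr m2 * (cr m1 - cr t7) ^ 2, 0],
               [0, - 1 / 2 * cr m2 * (cr m1 - cr t7), 0, 0],
               [0, 0, - cr m2 * (cr m1 - cr t7), 1], [0, 0, 0, 0]]]"

end

theory Submission
  imports Defs
begin

(* For each family there is a shear parameter d such that the five fields are tangent to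
   Q_d = {quadric_fun d = 0}, the preimage of the quadric under z1 \<mapsto> z1 - i d/2 w, in the strong
   sense X(quadric_fun d) = \<lambda> quadric_fun d; moreover their values at 0, together with the vertical
   vector i \<partial>/\<partial>w, form a real basis of C^3.
   Write M as a graph v = F(z, u) and let S p be the vertical projection of p onto M. Since the
   fields are tangent to M, the derivative of phi = quadric_fun d \<circ> S kills the fields at S p and
   the vertical vector; these almost form a basis near 0, so |d phi| \<le> K |phi| there. As
   phi 0 = 0, a Gronwall argument along rays gives phi = 0 near 0, i.e. M lies in Q_d. A vertical
   line meets Q_d at most once near 0, hence M and Q_d coincide near 0, and the shear maps Q_d
   onto the quadric. *)

definition vert :: "real \<Rightarrow> cpt" where
  "vert t = (0, 0, \<i> * complex_of_real t)"

definition cpt_basis :: "nat \<Rightarrow> cpt" where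
  "cpt_basis j = [(1, 0, 0), (\<i>, 0, 0), (0, 1, 0), (0, \<i>, 0), (0, 0, 1), (0, 0, \<i>)] ! j"

lemma bounded_linear_vert: "bounded_linear vert"
  unfolding vert_def
  by (intro bounded_linear_Pair bounded_linear_zero bounded_linear_compose[OF bounded_linear_mult_right]
      bounded_linear_of_real)

lemma vert_uminus: "vert (- t) = - vert t"
  by (simp add: vert_def)

lemma vert_0 [simp]: "vert 0 = 0"
  by (simp add: vert_def zero_prod_def)

lemma cpt_basis_5: "cpt_basis 5 = vert 1"
  by (simp add: cpt_basis_def vert_def)

lemma sum_lessThan_6: "(\<Sum>j<(6::nat). g j) = g 0 + g 1 + g 2 + g 3 + g 4 + (g 5 :: 'a::comm_monoid_add)"
  by (simp add: numeral_eq_Suc add.assoc)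

lemma deriv_bounded_by_abs_imp_zero:
  fixes g g' :: "real \<Rightarrow> real"
  assumes deriv: "\<And>t. 0 \<le> t \<Longrightarrow> t \<le> 1 \<Longrightarrow> (g has_real_derivative g' t) (at t)"
    and bound: "\<And>t. 0 \<le> t \<Longrightarrow> t \<le> 1 \<Longrightarrow> \<bar>g' t\<bar> \<le> K * \<bar>g t\<bar>"
    and "g 0 = 0"
  shows "g 1 = 0"
proof -
  define y where "y t = (g t)\<^sup>2 * exp (- 2 * K * t)" for t
  have "y 1 \<le> y 0"
  proof (rule DERIV_nonpos_imp_nonincreasing, simp)
    fix t :: real assume t: "0 \<le> t" "t \<le> 1"
    have "(y has_real_derivative
        2 * g t * g' t * exp (- 2 * K * t) + (g t)\<^sup>2 * (exp (- 2 * K * t) * (- 2 * K))) (at t)"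
      unfolding y_def by (rule derivative_eq_intros deriv t refl | simp)+
    moreover have "g t * g' t \<le> K * (g t)\<^sup>2"
    proof -
      have "g t * g' t \<le> \<bar>g t\<bar> * \<bar>g' t\<bar>" by (metis abs_ge_self abs_mult)
      also have "\<dots> \<le> \<bar>g t\<bar> * (K * \<bar>g t\<bar>)" by (rule mult_left_mono[OF bound[OF t]]) simp
      finally show ?thesis by (simp add: power2_eq_square abs_mult_self_eq algebra_simps)
    qed
    then have "2 * g t * g' t * exp (- 2 * K * t) + (g t)\<^sup>2 * (exp (- 2 * K * t) * (- 2 * K)) \<le> 0"
      by (simp add: algebra_simps)
    ultimately show "\<exists>y'. (y has_real_derivative y') (at t) \<and> y' \<le> 0" by blast
  qed
  then have "(g 1)\<^sup>2 * exp (- 2 * K) \<le> 0" by (simp add: y_def \<open>g 0 = 0\<close>)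
  then show ?thesis by (simp add: mult_le_0_iff)
qed

lemma derivative_bounded_by_abs_imp_zero_on_ball:
  fixes \<phi> :: "'a::real_normed_vector \<Rightarrow> real"
  assumes deriv: "\<And>p. p \<in> ball 0 \<delta> \<Longrightarrow> (\<phi> has_derivative L p) (at p)"
    and bound: "\<And>p h. p \<in> ball 0 \<delta> \<Longrightarrow> \<bar>L p h\<bar> \<le> K * \<bar>\<phi> p\<bar> * norm h"
    and "\<phi> 0 = 0" and p: "p \<in> ball 0 \<delta>"
  shows "\<phi> p = 0"
proof -
  have on_ray: "t *\<^sub>R p \<in> ball 0 \<delta>" if "0 \<le> t" "t \<le> 1" for t
    using p that mult_left_le_one_le[of "norm p" t] by simp
  have "(\<lambda>t. \<phi> (t *\<^sub>R p)) 1 = 0"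
  proof (rule deriv_bounded_by_abs_imp_zero[where g' = "\<lambda>t. L (t *\<^sub>R p) p" and K = "K * norm p"])
    fix t :: real assume t: "0 \<le> t" "t \<le> 1"
    have "((\<lambda>t. t *\<^sub>R p) has_derivative (\<lambda>h. h *\<^sub>R p)) (at t)"
      by (rule derivative_eq_intros refl | simp)+
    from has_derivative_compose[OF this deriv[OF on_ray[OF t]]]
    have "((\<lambda>t. \<phi> (t *\<^sub>R p)) has_derivative (\<lambda>h. L (t *\<^sub>R p) (h *\<^sub>R p))) (at t)" .
    moreover have "L (t *\<^sub>R p) (h *\<^sub>R p) = L (t *\<^sub>R p) p * h" for h
      using linear_scale[OF has_derivative_linear[OF deriv[OF on_ray[OF t]]]] by simp
    ultimately show "((\<lambda>t. \<phi> (t *\<^sub>R p)) has_real_derivative L (t *\<^sub>R p) p) (at t)"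
      by (simp add: has_field_derivative_def mult_commute_abs)
    show "\<bar>L (t *\<^sub>R p) p\<bar> \<le> K * norm p * \<bar>\<phi> (t *\<^sub>R p)\<bar>"
      using bound[OF on_ray[OF t], of p] by (simp add: algebra_simps)
  qed (simp add: \<open>\<phi> 0 = 0\<close>)
  then show ?thesis by simp
qed

lemma linear_cpt_bound:
  fixes l :: "cpt \<Rightarrow> real"
  assumes "linear l"
  shows "\<bar>l h\<bar> \<le> norm h * (\<Sum>j<6. \<bar>l (cpt_basis j)\<bar>)"
proof -
  obtain a b c where h: "h = (a, b, c)" by (metis prod.exhaust)
  have "h = Re a *\<^sub>R cpt_basis 0 + Im a *\<^sub>R cpt_basis 1 + Re b *\<^sub>R cpt_basis 2
      + Im b *\<^sub>R cpt_basis 3 + Re c *\<^sub>R cpt_basis 4 + Im c *\<^sub>R cpt_basis 5"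
    by (simp add: h cpt_basis_def complex_eq_iff)
  from arg_cong[where f = l, OF this]
  have lh: "l h = Re a * l (cpt_basis 0) + Im a * l (cpt_basis 1) + Re b * l (cpt_basis 2)
      + Im b * l (cpt_basis 3) + Re c * l (cpt_basis 4) + Im c * l (cpt_basis 5)"
    by (simp only: linear_add[OF assms] linear_scale[OF assms] real_scaleR_def)
  have "norm a \<le> norm h" "norm b \<le> norm h" "norm c \<le> norm h"
    using norm_fst_le[of a "(b, c)"] norm_snd_le[of "(b, c)" a] norm_fst_le[of b c]
      norm_snd_le[of c b] by (auto simp: h)
  then have "\<bar>Re x\<bar> \<le> norm h" "\<bar>Im x\<bar> \<le> norm h" if "x \<in> {a, b, c}" for x
    using that abs_Re_le_cmod[of x] abs_Im_le_cmod[of x] by auto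
  then have "\<bar>x * y\<bar> \<le> norm h * \<bar>y\<bar>" if "x \<in> {Re a, Im a, Re b, Im b, Re c, Im c}" for x y
    using that by (auto simp: abs_mult mult_right_mono)
  then show ?thesis
    unfolding lh sum_lessThan_6 distrib_left
    by (smt (verit) insertI1 insertI2)
qed

lemma linear_bound_perturbed_frame:
  fixes l :: "'a::real_normed_vector \<Rightarrow> real" and e w :: "nat \<Rightarrow> 'a"
  assumes l: "linear l"
    and frame: "\<And>h. \<bar>l h\<bar> \<le> norm h * (\<Sum>j<n. \<bar>l (e j)\<bar>)"
    and close: "\<And>j. j < n \<Longrightarrow> norm (w j - e j) \<le> 1 / (2 * real n)"
  shows "\<bar>l h\<bar> \<le> 2 * norm h * (\<Sum>j<n. \<bar>l (w j)\<bar>)"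
proof -
  define B where "B = (\<Sum>j<n. \<bar>l (e j)\<bar>)"
  have B_nonneg: "B \<ge> 0" unfolding B_def by (simp add: sum_nonneg)
  have "B \<le> 2 * (\<Sum>j<n. \<bar>l (w j)\<bar>)"
  proof (cases "n = 0")
    case False
    have *: "\<bar>l (e j)\<bar> \<le> \<bar>l (w j)\<bar> + B / (2 * real n)" if "j < n" for j
    proof -
      have "l (e j) = l (w j) - l (w j - e j)" by (simp add: linear_diff[OF l])
      then have "\<bar>l (e j)\<bar> \<le> \<bar>l (w j)\<bar> + \<bar>l (w j - e j)\<bar>" by linarith
      also have "\<bar>l (w j - e j)\<bar> \<le> norm (w j - e j) * B" using frame unfolding B_def .
      also have "\<dots> \<le> 1 / (2 * real n) * B" by (rule mult_right_mono[OF close[OF that] B_nonneg])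
      finally show ?thesis by simp
    qed
    have "(\<Sum>j<n. \<bar>l (e j)\<bar>) \<le> (\<Sum>j<n. \<bar>l (w j)\<bar> + B / (2 * real n))"
      by (rule sum_mono) (simp add: *)
    then have "B \<le> (\<Sum>j<n. \<bar>l (w j)\<bar>) + B / 2"
      using False by (simp add: B_def[symmetric] sum.distrib)
    then show ?thesis by simp
  qed (simp add: B_def)
  have "\<bar>l h\<bar> \<le> norm h * B" using frame unfolding B_def .
  also have "\<dots> \<le> norm h * (2 * (\<Sum>j<n. \<bar>l (w j)\<bar>))"
    by (rule mult_left_mono[OF \<open>B \<le> _\<close> norm_ge_zero])
  finally show ?thesis by simp
qed

lemma has_derivative_vert_1:
  fixes f :: "cpt \<Rightarrow> real"
  assumes shift: "\<And>q t. f (q + vert t) = f q + t" and "(f has_derivative D) (at p)"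
  shows "D (vert 1) = 1"
proof -
  have "((\<lambda>t. p + vert t) has_derivative vert) (at 0)"
    by (auto intro!: derivative_eq_intros bounded_linear.has_derivative[OF bounded_linear_vert])
  moreover have "(f has_derivative D) (at (p + vert 0))" using assms(2) by simp
  ultimately have "((\<lambda>t. f (p + vert t)) has_derivative (\<lambda>t. D (vert t))) (at 0)"
    by (rule has_derivative_compose[where f = "\<lambda>t. p + vert t" and x = 0])
  moreover have "((\<lambda>t. f (p + vert t)) has_derivative (\<lambda>t. t)) (at 0)"
    unfolding shift by (rule derivative_eq_intros refl | simp)+
  ultimately have "(\<lambda>t. D (vert t)) = (\<lambda>t. t)" by (rule has_derivative_unique)
  then show ?thesis by metis
qed

lemma has_derivative_vert_translate:
  fixes f :: "cpt \<Rightarrow> real"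
  assumes shift: "\<And>q t. f (q + vert t) = f q + t" and "(f has_derivative D) (at (p + vert t))"
  shows "(f has_derivative D) (at p)"
proof -
  have "((\<lambda>q. q + vert t) has_derivative (\<lambda>h. h)) (at p)"
    by (auto intro!: derivative_eq_intros)
  from has_derivative_compose[OF this assms(2)]
  have "((\<lambda>q. f (q + vert t) - t) has_derivative D) (at p)"
    by (auto intro: has_derivative_eq_rhs[OF has_derivative_diff[OF _ has_derivative_const]])
  then show ?thesis by (simp add: shift)
qed

lemma has_derivative_annihilating_all:
  assumes "\<And>k. k \<in> K \<Longrightarrow> \<exists>D. (f has_derivative D) (at p) \<and> D (X k) = 0" and "k0 \<in> K"
  shows "\<exists>D. (f has_derivative D) (at p) \<and> (\<forall>k\<in>K. D (X k) = 0)"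
proof -
  obtain D where D: "(f has_derivative D) (at p)" using assms by blast
  have "D (X k) = 0" if "k \<in> K" for k
    using assms(1)[OF that] has_derivative_unique[OF D] by metis
  with D show ?thesis by blast
qed

(* If D is the derivative of f and \<Psi>' that of \<Psi>, then \<Psi>' (h - vert (D h)) is the derivative of
   \<Psi> composed with the vertical projection onto {f = 0}. *)
lemma projected_invariant_derivative_bound:
  fixes \<Psi>' D :: "cpt \<Rightarrow> real" and Y :: "nat \<Rightarrow> cpt" and lam :: "nat \<Rightarrow> real"
  assumes "linear \<Psi>'" "linear D" and D_vert: "D (vert 1) = 1"
    and D_Y: "\<And>k. k < 5 \<Longrightarrow> D (Y k) = 0"
    and \<Psi>'_Y: "\<And>k. k < 5 \<Longrightarrow> \<Psi>' (Y k) = lam k * c"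
    and Y_close: "\<And>k. k < 5 \<Longrightarrow> norm (Y k - cpt_basis k) \<le> 1 / 12"
  shows "\<bar>\<Psi>' (h - vert (D h))\<bar> \<le> 2 * (\<Sum>k<5. \<bar>lam k\<bar>) * \<bar>c\<bar> * norm h"
proof -
  define L where "L h = \<Psi>' (h - vert (D h))" for h
  have "linear L"
    unfolding L_def
    by (intro linear_compose[OF _ \<open>linear \<Psi>'\<close>, unfolded o_def] linear_compose_sub linear_ident
        linear_compose[OF \<open>linear D\<close> bounded_linear.linear[OF bounded_linear_vert], unfolded o_def])
  define w where "w j = (if j < 5 then Y j else vert 1)" for j
  have "\<bar>L h\<bar> \<le> 2 * norm h * (\<Sum>j<6. \<bar>L (w j)\<bar>)"
  proof (rule linear_bound_perturbed_frame[OF \<open>linear L\<close> linear_cpt_bound[OF \<open>linear L\<close>]])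
    fix j :: nat assume "j < 6"
    then consider "j < 5" | "j = 5" by linarith
    then show "norm (w j - cpt_basis j) \<le> 1 / (2 * real 6)"
      by cases (use Y_close in \<open>auto simp: w_def cpt_basis_5\<close>)
  qed
  also have "(\<Sum>j<6. \<bar>L (w j)\<bar>) = (\<Sum>k<5. \<bar>lam k\<bar>) * \<bar>c\<bar>"
  proof -
    have "L (w 5) = 0" using D_vert linear_0[OF \<open>linear \<Psi>'\<close>] by (simp add: L_def w_def)
    moreover have "L (w k) = lam k * c" if "k < 5" for k
      using that D_Y \<Psi>'_Y by (simp add: L_def w_def)
    ultimately show ?thesis
      using sum.lessThan_Suc[of "\<lambda>j. \<bar>L (w j)\<bar>" 5] by (simp add: sum_distrib_right abs_mult)
  qed
  finally show ?thesis by (simp add: L_def algebra_simps)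
qed

(* f = v - F(z, u) defines a graph, the fields X k are tangent to it, and \<Psi> is a relative
   invariant of the fields. *)
lemma relative_invariant_vanishes_on_graph:
  fixes f \<Psi> :: "cpt \<Rightarrow> real" and \<Psi>' :: "cpt \<Rightarrow> cpt \<Rightarrow> real" and X :: "nat \<Rightarrow> cpt \<Rightarrow> cpt"
  assumes shift: "\<And>p t. f (p + vert t) = f p + t" and "f 0 = 0"
    and "open U" "0 \<in> U"
    and tangent: "\<And>p k. p \<in> U \<Longrightarrow> f p = 0 \<Longrightarrow> k < 5 \<Longrightarrow>
                    \<exists>D. (f has_derivative D) (at p) \<and> D (X k p) = 0"
    and \<Psi>': "\<And>p. (\<Psi> has_derivative \<Psi>' p) (at p)"
    and invariant: "\<And>p k. k < 5 \<Longrightarrow> \<Psi>' p (X k p) = lam k * \<Psi> p"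
    and X_cont: "\<And>k. k < 5 \<Longrightarrow> isCont (X k) 0"
    and X_0: "\<And>k. k < 5 \<Longrightarrow> X k 0 = cpt_basis k"
    and "\<Psi> 0 = 0" and "r > 0"
  shows "\<exists>\<delta>>0. \<forall>p \<in> ball 0 \<delta>. p - vert (f p) \<in> U \<inter> ball 0 r \<and> \<Psi> (p - vert (f p)) = 0"
proof -
  define S where "S p = p - vert (f p)" for p
  have S_shift: "S p + vert (f p) = p" for p by (simp add: S_def)
  have f_S: "f (S p) = 0" for p
    using shift[of "S p" "f p"] by (simp add: S_shift)
  have "isCont f 0"
    using tangent[OF \<open>0 \<in> U\<close> \<open>f 0 = 0\<close>, of 0] by (auto dest: has_derivative_continuous)
  then have "isCont S 0"
    unfolding S_def by (intro continuous_intros bounded_linear.continuous[OF bounded_linear_vert])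
  moreover have "S 0 = 0" using \<open>f 0 = 0\<close> by (simp add: S_def)
  ultimately have "(S \<longlongrightarrow> 0) (nhds 0)" by (metis continuous_at tendsto_at_iff_tendsto_nhds)
  define Q where "Q q \<longleftrightarrow> q \<in> U \<inter> ball 0 r \<and> (\<forall>k<5. norm (X k q - cpt_basis k) \<le> 1 / 12)" for q
  have "eventually Q (nhds 0)"
  proof -
    have "eventually (\<lambda>q. dist (X k q) (X k 0) < 1 / 12) (nhds 0)" if "k < 5" for k
      using X_cont[OF that] unfolding continuous_at tendsto_at_iff_tendsto_nhds
      by (rule tendstoD) simp
    then have "eventually (\<lambda>q. \<forall>k\<in>{..<5}. dist (X k q) (X k 0) < 1 / 12) (nhds 0)"
      by (intro eventually_ball_finite) auto
    then have "eventually (\<lambda>q. \<forall>k<5. norm (X k q - cpt_basis k) \<le> 1 / 12) (nhds 0)"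
      by eventually_elim (metis X_0 dist_norm lessThan_iff less_imp_le)
    moreover have "eventually (\<lambda>q. q \<in> U \<inter> ball 0 r) (nhds 0)"
      using \<open>open U\<close> \<open>0 \<in> U\<close> \<open>r > 0\<close> by (intro eventually_nhds_in_open) auto
    ultimately show ?thesis unfolding Q_def by eventually_elim auto
  qed
  with \<open>(S \<longlongrightarrow> 0) (nhds 0)\<close> have "eventually (\<lambda>p. Q (S p)) (nhds 0)"
    by (simp add: filterlim_iff)
  then obtain \<delta> where "\<delta> > 0" and Q_S: "\<And>p. p \<in> ball 0 \<delta> \<Longrightarrow> Q (S p)"
    unfolding eventually_nhds_metric by (auto simp: dist_commute)
  have "\<forall>p \<in> ball 0 \<delta>. \<exists>D. (f has_derivative D) (at p) \<and> (\<forall>k<5. D (X k (S p)) = 0)"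
  proof
    fix p :: cpt assume "p \<in> ball 0 \<delta>"
    then have "S p \<in> U" using Q_S unfolding Q_def by blast
    then obtain D where D: "(f has_derivative D) (at (S p))" "\<forall>k\<in>{..<5}. D (X k (S p)) = 0"
      using has_derivative_annihilating_all[of "{..<5::nat}" f "S p" "\<lambda>k. X k (S p)" 0]
        tangent[OF _ f_S] by auto
    then show "\<exists>D. (f has_derivative D) (at p) \<and> (\<forall>k<5. D (X k (S p)) = 0)"
      using has_derivative_vert_translate[OF shift, of D p "- f p"] by (auto simp: S_def vert_uminus)
  qed
  then obtain DF where DF: "\<And>p. p \<in> ball 0 \<delta> \<Longrightarrow> (f has_derivative DF p) (at p)"
      "\<And>p k. p \<in> ball 0 \<delta> \<Longrightarrow> k < 5 \<Longrightarrow> DF p (X k (S p)) = 0"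
    by (metis bchoice)
  define L where "L p h = \<Psi>' (S p) (h - vert (DF p h))" for p h
  have "\<Psi> (S p) = 0" if "p \<in> ball 0 \<delta>" for p
  proof (rule derivative_bounded_by_abs_imp_zero_on_ball[where \<phi> = "\<lambda>p. \<Psi> (S p)" and L = L])
    fix p :: cpt assume p: "p \<in> ball 0 \<delta>"
    have "(S has_derivative (\<lambda>h. h - vert (DF p h))) (at p)"
      unfolding S_def using DF(1)[OF p]
      by (auto intro!: derivative_eq_intros bounded_linear.has_derivative[OF bounded_linear_vert])
    then show "((\<lambda>p. \<Psi> (S p)) has_derivative L p) (at p)"
      unfolding L_def by (rule has_derivative_compose[OF _ \<Psi>'])
    show "\<bar>L p h\<bar> \<le> 2 * (\<Sum>k<5. \<bar>lam k\<bar>) * \<bar>\<Psi> (S p)\<bar> * norm h" for h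
      unfolding L_def
    proof (rule projected_invariant_derivative_bound)
      show "linear (\<Psi>' (S p))" "linear (DF p)"
        using \<Psi>'[of "S p"] DF(1)[OF p] by (simp_all add: has_derivative_linear)
      show "DF p (vert 1) = 1" using has_derivative_vert_1[OF shift DF(1)[OF p]] .
      show "norm (X k (S p) - cpt_basis k) \<le> 1 / 12" if "k < 5" for k
        using Q_S[OF p] that unfolding Q_def by blast
    qed (use DF(2)[OF p] invariant in auto)
  qed (use that \<open>\<Psi> 0 = 0\<close> \<open>f 0 = 0\<close> in \<open>simp_all add: S_def\<close>)
  with Q_S show ?thesis
    using \<open>\<delta> > 0\<close> unfolding Q_def S_def by blast
qed

lemma defphi_vert_shift: "defphi a (p + vert t) = defphi a p + t"
  by (cases p) (simp add: defphi_def vert_def)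

lemma defphi_0:
  assumes "\<forall>\<alpha>. a \<alpha> \<noteq> 0 \<longrightarrow> weight \<alpha> \<ge> 3"
  shows "defphi a 0 = 0"
proof -
  have zero_terms: "a \<alpha> * monom \<alpha> 0 0 0 = 0" for \<alpha>
  proof (cases "weight \<alpha> = 0")
    case True
    then have "a \<alpha> = 0" using assms by (metis not_numeral_le_zero)
    then show ?thesis by simp
  next
    case False
    then show ?thesis by (auto simp: weight_def monom_def split: prod.splits)
  qed
  have "hseries a 0 0 0 = 0" by (simp only: hseries_def zero_terms) simp
  then show ?thesis by (simp add: defphi_def zero_prod_def)
qed

lemma isCont_vfield: "isCont (vfield E) p"
proof -
  have "vfield E = (\<lambda>p. (E 0 0 * fst p + E 0 1 * fst (snd p) + E 0 2 * snd (snd p) + E 0 3,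
      E 1 0 * fst p + E 1 1 * fst (snd p) + E 1 2 * snd (snd p) + E 1 3,
      E 2 0 * fst p + E 2 1 * fst (snd p) + E 2 2 * snd (snd p) + E 2 3))"
    by (auto simp: vfield_def fun_eq_iff split: prod.splits)
  then show ?thesis by (simp add: continuous_intros)
qed

lemma nth_in_real_span:
  assumes "k < length Es"
  shows "Es ! k \<in> real_span Es"
proof -
  have "(\<Sum>m<length Es. complex_of_real (if m = k then 1 else 0) * (Es ! m) i j) = (Es ! k) i j" for i j
  proof -
    have "(\<Sum>m<length Es. complex_of_real (if m = k then 1 else 0) * (Es ! m) i j)
        = (\<Sum>m<length Es. if m = k then (Es ! m) i j else 0)" by (rule sum.cong) auto
    then show ?thesis using assms by simp
  qed
  then show ?thesis unfolding real_span_def by (auto intro!: exI[of _ "\<lambda>m. if m = k then 1 else 0"])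
qed

(* Defining function of the preimage of the quadric under the shear z1 \<mapsto> z1 - i d/2 w,
   and its derivative. *)
definition quadric_fun :: "real \<Rightarrow> cpt \<Rightarrow> real" where
  "quadric_fun d p = (case p of (z1, z2, w) \<Rightarrow>
     Im w - 2 * (Re z1 + d / 2 * Im w)\<^sup>2 - (Re z2)\<^sup>2 - (Im z2)\<^sup>2)"

definition quadric_fun_deriv :: "real \<Rightarrow> cpt \<Rightarrow> cpt \<Rightarrow> real" where
  "quadric_fun_deriv d p h = (case p of (z1, z2, w) \<Rightarrow> case h of (h1, h2, h3) \<Rightarrow>
     Im h3 - 4 * (Re z1 + d / 2 * Im w) * (Re h1 + d / 2 * Im h3)
       - 2 * Re z2 * Re h2 - 2 * Im z2 * Im h2)"

lemma has_derivative_quadric_fun: "(quadric_fun d has_derivative quadric_fun_deriv d p) (at p)"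
proof -
  have q: "quadric_fun d = (\<lambda>p. Im (snd (snd p)) - 2 * (Re (fst p) + d / 2 * Im (snd (snd p)))\<^sup>2
      - (Re (fst (snd p)))\<^sup>2 - (Im (fst (snd p)))\<^sup>2)"
    by (auto simp: quadric_fun_def fun_eq_iff split: prod.splits)
  have q': "quadric_fun_deriv d p = (\<lambda>h. Im (snd (snd h))
      - 2 * (2 * (Re (fst p) + d / 2 * Im (snd (snd p))) * (Re (fst h) + d / 2 * Im (snd (snd h))))
      - 2 * Re (fst (snd p)) * Re (fst (snd h)) - 2 * Im (fst (snd p)) * Im (fst (snd h)))"
    by (auto simp: quadric_fun_deriv_def fun_eq_iff split: prod.splits)
  show ?thesis
    unfolding q q'
    by (rule derivative_eq_intros refl bounded_linear.has_derivative[OF bounded_linear_Re]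
         bounded_linear.has_derivative[OF bounded_linear_Im] | simp)+
       (simp add: algebra_simps power2_eq_square)
qed

(* Two zeros of quadric_fun d on a vertical line satisfy (v' - v)(1 - d(2x + d(v + v')/2)) = 0,
   and the second factor is nonzero near 0. *)
lemma quadric_fun_vertical_unique:
  assumes "norm p < 1 / (4 * (1 + \<bar>d\<bar> + d\<^sup>2))" "norm (p + vert t) < 1 / (4 * (1 + \<bar>d\<bar> + d\<^sup>2))"
    and "quadric_fun d p = 0" "quadric_fun d (p + vert t) = 0"
  shows "t = 0"
proof -
  define r where "r = 1 / (4 * (1 + \<bar>d\<bar> + d\<^sup>2))"
  obtain a b c where p: "p = (a, b, c)" by (metis prod.exhaust)
  define x v v' where "x = Re a" and "v = Im c" and "v' = Im c + t"
  have coord_bound: "\<bar>Re a\<bar> \<le> norm q" "\<bar>Im c\<bar> \<le> norm q" if "q = (a, b, c)" for q a b c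
    using that norm_fst_le[of a "(b, c)"] norm_snd_le[of "(b, c)" a] norm_snd_le[of c b]
      abs_Re_le_cmod[of a] abs_Im_le_cmod[of c] by auto
  have "\<bar>x\<bar> < r" "\<bar>v\<bar> < r"
    using coord_bound[OF p] assms(1) by (auto simp: x_def v_def r_def)
  moreover have "\<bar>v'\<bar> < r"
    using coord_bound[of "p + vert t" a b "c + \<i> * of_real t"] assms(2)
    by (simp add: p vert_def v'_def r_def)
  ultimately have "\<bar>d * (v + v') / 2\<bar> \<le> \<bar>d\<bar> * r"
    using mult_left_mono[of "\<bar>v + v'\<bar> / 2" r "\<bar>d\<bar>"] by (simp add: abs_mult)
  then have "\<bar>2 * x + d * (v + v') / 2\<bar> \<le> 2 * r + \<bar>d\<bar> * r"
    using abs_triangle_ineq[of "2 * x" "d * (v + v') / 2"] \<open>\<bar>x\<bar> < r\<close> by simp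
  then have "\<bar>d * (2 * x + d * (v + v') / 2)\<bar> \<le> \<bar>d\<bar> * (2 * r + \<bar>d\<bar> * r)"
    by (simp add: abs_mult mult_left_mono)
  also have "\<dots> = (2 * \<bar>d\<bar> + d\<^sup>2) * r" by (simp add: algebra_simps power2_eq_square)
  also have "\<dots> < 1"
  proof -
    have "2 * \<bar>d\<bar> + d\<^sup>2 < 4 * (1 + \<bar>d\<bar> + d\<^sup>2)" by (smt (verit) zero_le_power2)
    then show ?thesis unfolding r_def by (simp add: add_pos_nonneg divide_less_eq field_simps)
  qed
  finally have "1 - d * (2 * x + d * (v + v') / 2) \<noteq> 0" by linarith
  moreover have "(v' - v) * (1 - d * (2 * x + d * (v + v') / 2)) = 0"
  proof -
    have "v - 2 * (x + d / 2 * v)\<^sup>2 - (Re b)\<^sup>2 - (Im b)\<^sup>2 = 0"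
      using assms(3) by (simp add: p quadric_fun_def x_def v_def)
    moreover have "v' - 2 * (x + d / 2 * v')\<^sup>2 - (Re b)\<^sup>2 - (Im b)\<^sup>2 = 0"
      using assms(4) by (simp add: p quadric_fun_def vert_def x_def v'_def)
    ultimately show ?thesis by (simp add: algebra_simps power2_eq_square) (simp add: field_simps)
  qed
  ultimately show ?thesis by (simp add: v_def v'_def)
qed

definition adapted_frame :: "real \<Rightarrow> (nat \<Rightarrow> real) \<Rightarrow> cmat list \<Rightarrow> bool" where
  "adapted_frame d lam Es \<longleftrightarrow> length Es = 5 \<and>
     (\<forall>k<5. vfield (Es ! k) 0 = cpt_basis k \<and>
        (\<forall>p. quadric_fun_deriv d p (vfield (Es ! k) p) = lam k * quadric_fun d p))"

lemma integral_variety_locally_quadric: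
  assumes "integral_variety (real_span Es) M" "adapted_frame d lam Es"
  shows "\<exists>\<delta>>0. M \<inter> ball 0 \<delta> = {p. quadric_fun d p = 0} \<inter> ball 0 \<delta>"
proof -
  obtain U a where "open U" "0 \<in> U" and weight: "\<forall>\<alpha>. a \<alpha> \<noteq> 0 \<longrightarrow> weight \<alpha> \<ge> 3"
    and M: "M = {p \<in> U. defphi a p = 0}"
    and tangent: "\<forall>E \<in> real_span Es. \<forall>p \<in> M. \<exists>D. (defphi a has_derivative D) (at p) \<and> D (vfield E p) = 0"
    using assms(1) unfolding integral_variety_def by blast
  have "length Es = 5"
    and invariant: "\<And>p k. k < 5 \<Longrightarrow>
          quadric_fun_deriv d p (vfield (Es ! k) p) = lam k * quadric_fun d p"
    and frame: "\<And>k. k < 5 \<Longrightarrow> vfield (Es ! k) 0 = cpt_basis k"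
    using assms(2) unfolding adapted_frame_def by blast+
  define r where "r = 1 / (4 * (1 + \<bar>d\<bar> + d\<^sup>2))"
  have "r > 0" unfolding r_def by (simp add: add_pos_nonneg)
  have "\<exists>\<delta>>0. \<forall>p \<in> ball 0 \<delta>.
      p - vert (defphi a p) \<in> U \<inter> ball 0 r \<and> quadric_fun d (p - vert (defphi a p)) = 0"
  proof (rule relative_invariant_vanishes_on_graph[OF defphi_vert_shift defphi_0[OF weight]
        \<open>open U\<close> \<open>0 \<in> U\<close> _ has_derivative_quadric_fun invariant isCont_vfield frame _ \<open>r > 0\<close>])
    show "\<exists>D. (defphi a has_derivative D) (at p) \<and> D (vfield (Es ! k) p) = 0"
      if "p \<in> U" "defphi a p = 0" "k < 5" for p k
    proof -
      have "Es ! k \<in> real_span Es" "p \<in> M"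
        using nth_in_real_span[of k Es] that \<open>length Es = 5\<close> M by simp_all
      then show ?thesis using tangent by blast
    qed
  qed (simp_all add: quadric_fun_def zero_prod_def)
  then obtain \<delta> where "\<delta> > 0" and proj: "\<And>p. p \<in> ball 0 \<delta> \<Longrightarrow>
      p - vert (defphi a p) \<in> U \<inter> ball 0 r \<and> quadric_fun d (p - vert (defphi a p)) = 0"
    by blast
  show ?thesis
  proof (intro exI conjI set_eqI iffI)
    show "min \<delta> r > 0" using \<open>\<delta> > 0\<close> \<open>r > 0\<close> by simp
  next
    fix p assume "p \<in> M \<inter> ball 0 (min \<delta> r)"
    then show "p \<in> {p. quadric_fun d p = 0} \<inter> ball 0 (min \<delta> r)"
      using proj[of p] M by auto
  next
    fix p assume p: "p \<in> {p. quadric_fun d p = 0} \<inter> ball 0 (min \<delta> r)"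
    define q where "q = p - vert (defphi a p)"
    have "q \<in> U \<inter> ball 0 r" "quadric_fun d q = 0" using proj[of p] p by (auto simp: q_def)
    moreover have "q + vert (defphi a p) = p" by (simp add: q_def)
    ultimately have "defphi a p = 0"
      using quadric_fun_vertical_unique[of q d "defphi a p"] p by (auto simp: r_def)
    then show "p \<in> M \<inter> ball 0 (min \<delta> r)"
      using M p \<open>q \<in> U \<inter> ball 0 r\<close> by (simp add: q_def)
  qed
qed

definition shear :: "real \<Rightarrow> cmat" where
  "shear d = (\<lambda>i j. if i = j then 1 else if i = 0 \<and> j = 2 then - \<i> * of_real (d / 2) else 0)"

lemma affmap_shear:
  "affmap (shear d) (0, 0, 0) p = (fst p - \<i> * of_real (d / 2) * snd (snd p), fst (snd p), snd (snd p))"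
  by (cases p) (simp add: affmap_def shear_def)

lemma affinely_equivalent_quadric_if_locally_quadric:
  assumes "\<delta> > 0" "M \<inter> ball 0 \<delta> = {p. quadric_fun d p = 0} \<inter> ball 0 \<delta>"
  shows "affinely_equivalent M quadric"
proof -
  define A A' where "A = affmap (shear d) (0, 0, 0)" and "A' = affmap (shear (- d)) (0, 0, 0)"
  have A_A': "A (A' p) = p" and A'_A: "A' (A p) = p" for p
    by (simp_all add: A_def A'_def affmap_shear algebra_simps)
  have "bij A" by (rule o_bij[of A']) (simp_all add: fun_eq_iff A_A' A'_A)
  have quadric_iff: "A p \<in> quadric \<longleftrightarrow> quadric_fun d p = 0" for p
    by (cases p) (auto simp: A_def affmap_shear quadric_def quadric_fun_def cmod_power2 algebra_simps)
  have "continuous_on UNIV A'"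
    unfolding A'_def affmap_shear by (intro continuous_intros)
  then have "open (A' -` ball 0 \<delta>)" by (simp add: open_vimage)
  moreover have "A ` (M \<inter> ball 0 \<delta>) = quadric \<inter> A' -` ball 0 \<delta>"
  proof (intro set_eqI iffI)
    fix x assume "x \<in> A ` (M \<inter> ball 0 \<delta>)"
    then show "x \<in> quadric \<inter> A' -` ball 0 \<delta>" using assms(2) quadric_iff A'_A by auto
  next
    fix x assume "x \<in> quadric \<inter> A' -` ball 0 \<delta>"
    then have "A' x \<in> M \<inter> ball 0 \<delta>" using assms(2) quadric_iff[of "A' x"] A_A' by auto
    then show "x \<in> A ` (M \<inter> ball 0 \<delta>)" using A_A'[of x] by (metis image_eqI)
  qed
  ultimately show ?thesis
    unfolding affinely_equivalent_def using \<open>bij A\<close> \<open>\<delta> > 0\<close>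
    by (intro exI[of _ "shear d"] exI[of _ "(0, 0, 0)"] exI[of _ "ball 0 \<delta>"]
        exI[of _ "A' -` ball 0 \<delta>"]) (simp_all add: A_def)
qed

lemma all_less_5: "(\<forall>k<5. P k) \<longleftrightarrow> P 0 \<and> P 1 \<and> P 2 \<and> P 3 \<and> P (4::nat)"
  by (auto simp: less_Suc_eq numeral_eq_Suc)

lemma familyA_adapted_frame: "adapted_frame 0 ((!) [2 * m1, 2 * m2, 0, 0, 0]) (familyA m1 m2 t16)"
  unfolding adapted_frame_def all_less_5 split_paired_All
  by (simp add: familyA_def mat_rows_def vfield_def cpt_basis_def quadric_fun_def
      quadric_fun_deriv_def zero_prod_def algebra_simps power2_eq_square)

lemma familyB_adapted_frame: "adapted_frame m1 ((!) [0, 0, 2 * m3, 2 * m4, 0]) (familyB m1 m3 m4)"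
  unfolding adapted_frame_def all_less_5 split_paired_All
  by (simp add: familyB_def mat_rows_def vfield_def cpt_basis_def quadric_fun_def
      quadric_fun_deriv_def zero_prod_def algebra_simps power2_eq_square)

lemma familyC_adapted_frame:
  "adapted_frame (m1 - t7) ((!) [2 * t7, 2 * m2, 2 * m3, 2 * m4, - m2 * (m1 - t7)])
     (familyC m1 m2 m3 m4 t7)"
  unfolding adapted_frame_def all_less_5 split_paired_All
  by (simp add: familyC_def mat_rows_def vfield_def cpt_basis_def quadric_fun_def
      quadric_fun_deriv_def zero_prod_def algebra_simps power2_eq_square; simp add: field_simps)

theorem theorem4p1:
  fixes m1 m2 m3 m4 t7 t16 :: real and Es :: "cmat list" and M :: "cpt set"
  assumes "(m2 \<noteq> 0 \<and> Es = familyA m1 m2 t16) \<or> Es = familyB m1 m3 m4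
           \<or> Es = familyC m1 m2 m3 m4 t7"
    and "integral_variety (real_span Es) M"
  shows "affinely_equivalent M quadric"
proof -
  obtain d lam where "adapted_frame d lam Es"
    using assms(1) familyA_adapted_frame familyB_adapted_frame familyC_adapted_frame by blast
  then obtain \<delta> where "\<delta> > 0" "M \<inter> ball 0 \<delta> = {p. quadric_fun d p = 0} \<inter> ball 0 \<delta>"
    using integral_variety_locally_quadric assms(2) by blast
  then show ?thesis by (rule affinely_equivalent_quadric_if_locally_quadric)
qed

end
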